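(* Consider the planted clique problem with $\rho\le1/2$. Let $\ell\ge0$ be an integer, $D=2\ell+1$, and $f(Y)=\tau_\ell\Big(\frac{2}{\rho}\Big(\frac{1}{n-1}\sum_{i=2}^nY_{1i}-\frac12\Big)\Big)$. For any $0<r<1$, if $\rho^2\ge\frac{432}{r^2(n-1)}\big[\log4+3D\log(9/\rho)\big]$, then $\mathbb{E}(f(Y)-x)^2\le D^2r^{D-1}$.
   Context: Planted clique problem: $v\in\{0,1\}^n$ has i.i.d. $\mathrm{Bernoulli}(\rho)$ entries, $\rho\in(0,1)$; conditionally on $v$, for each pair $i<j$ independently, $Y_{ij}=1$ if $v_iv_j=1$ and otherwise $Y_{ij}\sim\mathrm{Bernoulli}(1/2)$; $Y_{1i}$ is the entry for pair $\{1,i\}$; target $x=v_1$. $\tau_\ell(y)=(2\ell+1)\binom{2\ell}{\ell}\int_0^yt^\ell(1-t)^\ell\,dt$, a polynomial of degree $2\ell+1$. Logarithms are natural. *)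

theory Defs
  imports "HOL-Probability.Probability"
begin

text \<open>Vertices are 1..n; unordered pairs are represented as (i,j) with 1 \<le> i < j \<le> n.\<close>

definition pc_pairs :: "nat \<Rightarrow> (nat \<times> nat) set" where
  "pc_pairs n = {(i, j). 1 \<le> i \<and> i < j \<and> j \<le> n}"

definition pc_v_pmf :: "nat \<Rightarrow> real \<Rightarrow> (nat \<Rightarrow> bool) pmf" where
  "pc_v_pmf n \<rho> = Pi_pmf {1..n} False (\<lambda>_. bernoulli_pmf \<rho>)"

definition pc_Y_pmf :: "nat \<Rightarrow> (nat \<Rightarrow> bool) \<Rightarrow> (nat \<times> nat \<Rightarrow> bool) pmf" where
  "pc_Y_pmf n v = Pi_pmf (pc_pairs n) False
     (\<lambda>(i, j). if v i \<and> v j then return_pmf True else bernoulli_pmf (1/2))"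

definition planted_clique :: "nat \<Rightarrow> real \<Rightarrow> ((nat \<Rightarrow> bool) \<times> (nat \<times> nat \<Rightarrow> bool)) pmf" where
  "planted_clique n \<rho> = do { v \<leftarrow> pc_v_pmf n \<rho>; Y \<leftarrow> pc_Y_pmf n v; return_pmf (v, Y) }"

definition tau :: "nat \<Rightarrow> real \<Rightarrow> real" where
  "tau l y = real (2*l+1) * real ((2*l) choose l) *
     (LBINT t=0..y. t ^ l * (1 - t) ^ l)"

definition pc_estimator :: "nat \<Rightarrow> real \<Rightarrow> nat \<Rightarrow> (nat \<times> nat \<Rightarrow> bool) \<Rightarrow> real" where
  "pc_estimator n \<rho> l Y =
     tau l ((2 / \<rho>) * ((1 / (real n - 1)) * (\<Sum>i=2..n. of_bool (Y (1, i))) - 1/2))"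

end

theory Submission
  imports Defs
begin

text \<open>
  Write x = v 1 and let W be the centred, rescaled degree of vertex 1, so that the estimator is
  tau_l (x + W). As tau_l fixes 0 and 1 and its derivative vanishes to order l there,
  |tau_l (x + W) - x| <= D 4^l |W|^(l+1) (1 + |W|)^l, and since t^k <= k! theta^(-k) e^(theta t)
  the squared error is at most a constant times e^(theta |W|), where theta = 50 D / r.
  Conditionally on v the edges at vertex 1 are independent Bernoulli variables, so Hoeffding's
  lemma makes W sub-Gaussian: E e^(mu W) <= exp (mu^2 / (2 rho^2 (n - 1))). The sample-size
  hypothesis keeps this exponent below D/2 at mu = +-theta, and the factorials in the constant,
  divided by powers of theta, then leave the bound D^2 r^(2l).
\<close>

definition beta_poly :: "nat \<Rightarrow> real \<Rightarrow> real" where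
  "beta_poly l y = (\<Sum>k\<le>l. real (l choose k) * (-1)^k / real (l+k+1) * y^(l+k+1))"

lemma beta_poly_0 [simp]: "beta_poly l 0 = 0"
  by (simp add: beta_poly_def)

lemma has_real_derivative_beta_poly:
  "(beta_poly l has_real_derivative y^l * (1-y)^l) (at y within S)"
proof -
  have "(beta_poly l has_real_derivative
          (\<Sum>k\<le>l. real (l choose k) * (-1)^k / real (l+k+1) * (real (l+k+1) * y^(l+k+1 - Suc 0))))
        (at y within S)"
    unfolding beta_poly_def by (intro DERIV_sum DERIV_cmult DERIV_pow)
  moreover have "(\<Sum>k\<le>l. real (l choose k) * (-1)^k / real (l+k+1) * (real (l+k+1) * y^(l+k+1 - Suc 0)))
      = (\<Sum>k\<le>l. y^l * (real (l choose k) * (-y)^k * 1^(l-k)))"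
    by (rule sum.cong) (simp_all add: power_add power_minus[of y] del: of_nat_add of_nat_Suc)
  moreover have "\<dots> = y^l * (1-y)^l"
    using binomial_ring[of "-y" 1 l] by (simp add: sum_distrib_left)
  ultimately show ?thesis by simp
qed

lemma tau_eq_beta_poly: "tau l y = real (2*l+1) * real ((2*l) choose l) * beta_poly l y"
proof -
  have "(LBINT t=ereal 0..ereal y. t^l * (1-t)^l) = beta_poly l y - beta_poly l 0"
    by (rule interval_integral_FTC_finite)
       (auto intro!: continuous_intros
             simp: has_real_derivative_iff_has_vector_derivative[symmetric] has_real_derivative_beta_poly)
  thus ?thesis by (simp add: tau_def zero_ereal_def)
qed

lemma beta_poly_1: "beta_poly l 1 = Beta (real l + 1) (real l + 1)"
proof -
  have "((\<lambda>t. t^l * (1-t)^l) has_integral beta_poly l 1) {0..1}"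
    using fundamental_theorem_of_calculus[of 0 1 "beta_poly l" "\<lambda>t. t^l * (1-t)^l"]
    by (simp add: has_real_derivative_iff_has_vector_derivative[symmetric] has_real_derivative_beta_poly)
  moreover have "((\<lambda>t. t^l * (1-t)^l) has_integral Beta (real l + 1) (real l + 1)) {0..1}"
  proof -
    have "((\<lambda>t. t powr (real l + 1 - 1) * (1 - t) powr (real l + 1 - 1))
            has_integral Beta (real l + 1) (real l + 1)) {0<..<1}"
      using has_integral_Beta_real[of "real l + 1" "real l + 1"] by (simp add: has_integral_Icc_iff_Ioo)
    hence "((\<lambda>t. t^l * (1-t)^l) has_integral Beta (real l + 1) (real l + 1)) {0<..<1}"
      by (rule has_integral_eq[rotated]) (auto simp: powr_realpow)
    thus ?thesis by (simp add: has_integral_Icc_iff_Ioo)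
  qed
  ultimately show ?thesis by (rule has_integral_unique)
qed

lemma tau_0 [simp]: "tau l 0 = 0"
  by (simp add: tau_eq_beta_poly)

lemma tau_1 [simp]: "tau l 1 = 1"
proof -
  have "Gamma (real l + 1) = fact l"
    using Gamma_fact[of l] by (simp add: add.commute)
  moreover have "Gamma (real l + 1 + (real l + 1)) = real (2*l+1) * fact (2*l)"
  proof -
    have "real l + 1 + (real l + 1) = 1 + real (2*l+1)" by simp
    thus ?thesis
      using Gamma_fact[of "2*l+1", where 'a=real] by (simp only: fact_Suc) simp
  qed
  moreover have "real ((2*l) choose l) = fact (2*l) / (fact l * fact l)"
    using binomial_fact[of l "2*l", where 'a=real] by (simp add: mult_2)
  ultimately show ?thesis
    by (simp add: tau_eq_beta_poly beta_poly_1 Beta_def del: of_nat_add of_nat_mult)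
qed

lemma has_real_derivative_tau:
  "(tau l has_real_derivative real (2*l+1) * real ((2*l) choose l) * (y^l * (1-y)^l)) (at y within S)"
  unfolding tau_eq_beta_poly[abs_def] by (intro DERIV_cmult has_real_derivative_beta_poly)

lemma abs_mult_one_minus_le:
  fixes a y z :: real
  assumes "a = 0 \<or> a = 1" and "min a y \<le> z" "z \<le> max a y"
  shows "\<bar>z * (1 - z)\<bar> \<le> \<bar>y - a\<bar> * (1 + \<bar>y - a\<bar>)"
proof -
  have "\<bar>z\<bar> \<le> \<bar>y - a\<bar> \<and> \<bar>1 - z\<bar> \<le> 1 + \<bar>y - a\<bar> \<or> \<bar>1 - z\<bar> \<le> \<bar>y - a\<bar> \<and> \<bar>z\<bar> \<le> 1 + \<bar>y - a\<bar>"
    using assms by (auto simp: min_def max_def split: if_splits)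
  thus ?thesis
    unfolding abs_mult by (metis abs_ge_zero mult.commute mult_mono)
qed

lemma central_binomial_le_4_power: "real ((2*l) choose l) \<le> 4^l"
proof -
  have "(2*l) choose l \<le> 4^l"
    using binomial_le_pow2[of "2*l" l] by (simp add: power_mult)
  thus ?thesis by (metis of_nat_le_iff of_nat_numeral of_nat_power)
qed

lemma tau_dist_le:
  assumes a: "a = 0 \<or> a = 1"
  shows "\<bar>tau l y - a\<bar> \<le> real (2*l+1) * 4^l * \<bar>y - a\<bar>^(l+1) * (1 + \<bar>y - a\<bar>)^l"
proof -
  define B where "B = real (2*l+1) * 4^l * (\<bar>y - a\<bar> * (1 + \<bar>y - a\<bar>))^l"
  have "norm (tau l y - tau l a) \<le> B * norm (y - a)"
  proof (rule field_differentiable_bound[of "{min a y..max a y}"])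
    show "(tau l has_real_derivative real (2*l+1) * real ((2*l) choose l) * (z^l * (1-z)^l))
            (at z within {min a y..max a y})" for z
      by (rule has_real_derivative_tau)
  next
    fix z assume z: "z \<in> {min a y..max a y}"
    have "\<bar>z^l * (1-z)^l\<bar> \<le> (\<bar>y - a\<bar> * (1 + \<bar>y - a\<bar>))^l"
      using abs_mult_one_minus_le[OF a, of y z] z
      by (simp add: power_mult_distrib[symmetric] power_abs power_mono)
    thus "norm (real (2*l+1) * real ((2*l) choose l) * (z^l * (1-z)^l)) \<le> B"
      unfolding B_def real_norm_def abs_mult abs_of_nat
      by (intro mult_mono mult_left_mono central_binomial_le_4_power) auto
  qed auto
  moreover have "tau l a = a"
    using a by auto
  ultimately show ?thesis
    by (simp add: B_def power_mult_distrib mult_ac)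
qed

lemma power_div_fact_le_exp:
  fixes x :: real
  assumes "0 \<le> x"
  shows "x^k / fact k \<le> exp x"
proof -
  have s: "(\<lambda>n. x^n /\<^sub>R fact n) sums exp x"
    by (rule exp_converges)
  have "sum (\<lambda>n. x^n /\<^sub>R fact n) {k} \<le> suminf (\<lambda>n. x^n /\<^sub>R fact n)"
    by (rule sum_le_suminf) (use s assms in \<open>auto simp: sums_iff\<close>)
  thus ?thesis
    using s by (simp add: sums_iff divide_inverse mult.commute)
qed

lemma power_le_fact_exp:
  fixes t \<theta> :: real
  assumes "0 \<le> t" "0 < \<theta>"
  shows "t^k \<le> fact k / \<theta>^k * exp (\<theta> * t)"
proof -
  have "(\<theta> * t)^k / fact k \<le> exp (\<theta> * t)"
    using assms by (intro power_div_fact_le_exp) auto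
  thus ?thesis
    using assms by (simp add: field_simps power_mult_distrib)
qed

lemma one_plus_power_le:
  fixes t :: real
  assumes "0 \<le> t"
  shows "(1 + t)^(2*l) \<le> 4^l * (1 + t^(2*l))"
proof -
  have "(1 + t)^(2*l) \<le> (2 * max 1 t)^(2*l)"
    using assms by (intro power_mono) auto
  also have "\<dots> = 4^l * max 1 t^(2*l)"
    by (simp add: power_mult_distrib power_mult)
  also have "\<dots> \<le> 4^l * (1 + t^(2*l))"
    using assms by (intro mult_left_mono) (auto simp: max_def)
  finally show ?thesis .
qed

definition tau_moment_const :: "nat \<Rightarrow> real \<Rightarrow> real" where
  "tau_moment_const l \<theta> =
     real (2*l+1)^2 * 64^l * (fact (2*l+2) / \<theta>^(2*l+2) + fact (4*l+2) / \<theta>^(4*l+2))"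

lemma tau_moment_const_nonneg: "0 < \<theta> \<Longrightarrow> 0 \<le> tau_moment_const l \<theta>"
  unfolding tau_moment_const_def by (intro mult_nonneg_nonneg add_nonneg_nonneg) auto

lemma tau_dist_sq_le_exp:
  assumes a: "a = 0 \<or> a = 1" and \<theta>: "0 < \<theta>"
  shows "(tau l (a + w) - a)^2 \<le> tau_moment_const l \<theta> * exp (\<theta> * \<bar>w\<bar>)"
proof -
  define t where "t = \<bar>w\<bar>"
  have t: "0 \<le> t"
    by (simp add: t_def)
  have "(tau l (a + w) - a)^2 \<le> (real (2*l+1) * 4^l * t^(l+1) * (1 + t)^l)^2"
    using tau_dist_le[OF a, of l "a + w"] by (simp add: t_def power_mono flip: abs_le_square_iff)
  also have "\<dots> = real (2*l+1)^2 * 16^l * (t^(2*l+2) * (1 + t)^(2*l))"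
  proof -
    have "(t^(l+1))^2 = t^(2*l+2)" "((1+t)^l)^2 = (1+t)^(2*l)"
      by (subst power_mult[symmetric], simp add: algebra_simps)+
    moreover have "((4::real)^l)^2 = 16^l"
      by (simp add: power2_eq_square power_mult_distrib[symmetric])
    ultimately show ?thesis
      by (simp only: power_mult_distrib mult_ac)
  qed
  also have "\<dots> \<le> real (2*l+1)^2 * 16^l * (t^(2*l+2) * (4^l * (1 + t^(2*l))))"
    using t by (intro mult_left_mono one_plus_power_le) auto
  also have "\<dots> = real (2*l+1)^2 * (16^l * 4^l) * (t^(2*l+2) + t^(2*l+2) * t^(2*l))"
    by (simp only: distrib_left mult_1_right mult_ac)
  also have "\<dots> = real (2*l+1)^2 * 64^l * (t^(2*l+2) + t^(4*l+2))"
  proof -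
    have "t^(2*l+2) * t^(2*l) = t^(4*l+2)"
      by (simp flip: power_add)
    thus ?thesis
      by (simp flip: power_mult_distrib)
  qed
  also have "\<dots> \<le> real (2*l+1)^2 * 64^l *
      (fact (2*l+2) / \<theta>^(2*l+2) * exp (\<theta> * t) + fact (4*l+2) / \<theta>^(4*l+2) * exp (\<theta> * t))"
    using t \<theta> by (intro mult_left_mono add_mono power_le_fact_exp) auto
  finally show ?thesis
    by (simp add: tau_moment_const_def t_def algebra_simps)
qed

lemma finite_pc_pairs: "finite (pc_pairs n)"
  by (rule finite_subset[of _ "{1..n} \<times> {1..n}"]) (auto simp: pc_pairs_def)

lemma finite_set_pc_v_pmf: "finite (set_pmf (pc_v_pmf n \<rho>))"
  unfolding pc_v_pmf_def by (subst set_Pi_pmf) (auto intro!: finite_PiE_dflt)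

lemma finite_set_pc_Y_pmf: "finite (set_pmf (pc_Y_pmf n v))"
  unfolding pc_Y_pmf_def using finite_pc_pairs by (subst set_Pi_pmf) (auto intro!: finite_PiE_dflt)

lemma prod_pc_pairs_vertex_1:
  fixes h :: "nat \<times> nat \<Rightarrow> real"
  shows "(\<Prod>p\<in>pc_pairs n. if fst p = 1 then h p else 1) = (\<Prod>i\<in>{2..n}. h (1, i))"
proof -
  have "(\<Prod>p\<in>pc_pairs n. if fst p = 1 then h p else 1) = (\<Prod>p\<in>{p\<in>pc_pairs n. fst p = 1}. h p)"
    by (rule prod.inter_filter[OF finite_pc_pairs, symmetric])
  also have "{p\<in>pc_pairs n. fst p = 1} = Pair 1 ` {2..n}"
    by (auto simp: pc_pairs_def image_iff)
  finally show ?thesis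
    by (simp add: prod.reindex inj_on_def)
qed

lemma pc_Y_mgf_degree_1:
  fixes c :: real
  shows "measure_pmf.expectation (pc_Y_pmf n v) (\<lambda>Y. exp (c * (\<Sum>i=2..n. of_bool (Y (1, i)))))
     = (\<Prod>i\<in>{2..n}. if v 1 \<and> v i then exp c else (1 + exp c) / 2)"
proof -
  define g where "g = (\<lambda>(p :: nat \<times> nat) b. if fst p = 1 then exp (c * of_bool b) else (1::real))"
  have "exp (c * (\<Sum>i=2..n. of_bool (Y (1, i)))) = (\<Prod>p\<in>pc_pairs n. g p (Y p))" for Y
    unfolding g_def prod_pc_pairs_vertex_1 sum_distrib_left by (simp only: exp_sum finite_atLeastAtMost)
  hence "measure_pmf.expectation (pc_Y_pmf n v) (\<lambda>Y. exp (c * (\<Sum>i=2..n. of_bool (Y (1, i)))))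
      = (\<Prod>p\<in>pc_pairs n. measure_pmf.expectation
           ((\<lambda>(i, j). if v i \<and> v j then return_pmf True else bernoulli_pmf (1/2)) p) (g p))"
    unfolding pc_Y_pmf_def
    by (simp, intro expectation_prod_Pi_pmf finite_pc_pairs integrable_measure_pmf_finite)
       (auto simp: g_def split: prod.split)
  also have "\<dots> = (\<Prod>p\<in>pc_pairs n.
      if fst p = 1 then (if v 1 \<and> v (snd p) then exp c else (1 + exp c) / 2) else 1)"
    by (rule prod.cong) (auto simp: g_def)
  also have "\<dots> = (\<Prod>i\<in>{2..n}. if v 1 \<and> v i then exp c else (1 + exp c) / 2)"
    using prod_pc_pairs_vertex_1[of "\<lambda>p. if v 1 \<and> v (snd p) then exp c else (1 + exp c) / 2"]
    by simp
  finally show ?thesis .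
qed

lemma expectation_pc_v_pmf_prod:
  fixes \<phi> \<psi> :: "bool \<Rightarrow> real"
  assumes n: "1 \<le> n" and \<rho>: "0 \<le> \<rho>" "\<rho> \<le> 1" and nonneg: "\<And>b. 0 \<le> \<phi> b" "\<And>b. 0 \<le> \<psi> b"
  shows "measure_pmf.expectation (pc_v_pmf n \<rho>) (\<lambda>v. \<phi> (v 1) * (\<Prod>i\<in>{2..n}. \<psi> (v i)))
           = (\<rho> * \<phi> True + (1 - \<rho>) * \<phi> False) * (\<rho> * \<psi> True + (1 - \<rho>) * \<psi> False)^(n-1)"
proof -
  define h where "h i = (if i = (1::nat) then \<phi> else \<psi>)" for i
  have split: "(\<Prod>i\<in>{1..n}. f i) = f 1 * (\<Prod>i\<in>{2..n}. f i)" for f :: "nat \<Rightarrow> real"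
    using prod.atLeast_Suc_atMost[OF n, of f] by (simp add: numeral_2_eq_2)
  have "measure_pmf.expectation (pc_v_pmf n \<rho>) (\<lambda>v. \<phi> (v 1) * (\<Prod>i\<in>{2..n}. \<psi> (v i)))
      = measure_pmf.expectation (pc_v_pmf n \<rho>) (\<lambda>v. \<Prod>i\<in>{1..n}. h i (v i))"
    unfolding split h_def by simp
  also have "\<dots> = (\<Prod>i\<in>{1..n}. measure_pmf.expectation (bernoulli_pmf \<rho>) (h i))"
    unfolding pc_v_pmf_def
    by (rule expectation_prod_Pi_pmf) (auto intro!: integrable_measure_pmf_finite simp: h_def nonneg)
  also have "\<dots> = (\<rho> * \<phi> True + (1 - \<rho>) * \<phi> False) * (\<rho> * \<psi> True + (1 - \<rho>) * \<psi> False)^(n-1)"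
    unfolding split using \<rho> by (simp add: h_def mult.commute)
  finally show ?thesis .
qed

lemma expectation_pc_v_pmf_vertex_1:
  fixes K m :: "bool \<Rightarrow> real"
  assumes n: "1 \<le> n" and \<rho>: "0 \<le> \<rho>" "\<rho> \<le> 1" and nonneg: "\<And>b. 0 \<le> K b" "\<And>b. 0 \<le> m b"
  shows "measure_pmf.expectation (pc_v_pmf n \<rho>) (\<lambda>v. K (v 1) * (\<Prod>i\<in>{2..n}. m (v 1 \<and> v i)))
    = \<rho> * K True * (\<rho> * m True + (1 - \<rho>) * m False)^(n-1) + (1 - \<rho>) * K False * m False^(n-1)"
proof -
  have "K (v 1) * (\<Prod>i\<in>{2..n}. m (v 1 \<and> v i))
      = K True * of_bool (v 1) * (\<Prod>i\<in>{2..n}. m (v i))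
        + K False * of_bool (\<not> v 1) * (\<Prod>i\<in>{2..n}. m False)" for v :: "nat \<Rightarrow> bool"
    by (cases "v 1") simp_all
  hence "measure_pmf.expectation (pc_v_pmf n \<rho>) (\<lambda>v. K (v 1) * (\<Prod>i\<in>{2..n}. m (v 1 \<and> v i)))
      = measure_pmf.expectation (pc_v_pmf n \<rho>) (\<lambda>v. K True * of_bool (v 1) * (\<Prod>i\<in>{2..n}. m (v i)))
        + measure_pmf.expectation (pc_v_pmf n \<rho>) (\<lambda>v. K False * of_bool (\<not> v 1) * (\<Prod>i\<in>{2..n}. m False))"
    by (simp only:) (intro Bochner_Integration.integral_add integrable_measure_pmf_finite finite_set_pc_v_pmf)
  also have "\<dots> = \<rho> * K True * (\<rho> * m True + (1 - \<rho>) * m False)^(n-1) + (1 - \<rho>) * K False * m False^(n-1)"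
    by (subst (1 2) expectation_pc_v_pmf_prod[OF n \<rho>]) (auto simp: nonneg algebra_simps)
  finally show ?thesis .
qed

lemma bernoulli_mgf_le:
  fixes p c :: real
  assumes "0 \<le> p" "p \<le> 1"
  shows "1 - p + p * exp c \<le> exp (p * c + c^2 / 8)"
proof -
  have nonneg_case: "1 - q + q * exp h \<le> exp (q * h + h^2 / 8)" if "0 \<le> h" "0 \<le> q" for h q :: real
  proof -
    have "ln (1 + q * (exp h - 1)) \<le> q * h + h^2 / 8"
      using Hoeffdings_lemma_aux[OF that] by (simp add: algebra_simps)
    moreover have "0 < 1 + q * (exp h - 1)"
      using that by (intro add_pos_nonneg) auto
    ultimately have "1 + q * (exp h - 1) \<le> exp (q * h + h^2 / 8)"
      by (metis exp_le_cancel_iff exp_ln)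
    thus ?thesis
      by (simp add: algebra_simps)
  qed
  show ?thesis
  proof (cases "0 \<le> c")
    case True
    thus ?thesis using nonneg_case assms by blast
  next
    case False
    have "1 - p + p * exp c = exp c * (1 - (1 - p) + (1 - p) * exp (-c))"
      by (simp add: algebra_simps exp_minus)
    also have "\<dots> \<le> exp c * exp ((1 - p) * (-c) + (-c)^2 / 8)"
      using nonneg_case[of "-c" "1 - p"] False assms by (intro mult_left_mono) auto
    also have "\<dots> = exp (p * c + c^2 / 8)"
      by (simp add: algebra_simps flip: exp_add)
    finally show ?thesis .
  qed
qed

lemma bernoulli_mgf_power_le:
  fixes p c :: real
  assumes "0 \<le> p" "p \<le> 1"
  shows "(1 - p + p * exp c)^k \<le> exp (real k * (p * c + c^2 / 8))"
proof -
  have "0 \<le> 1 - p + p * exp c"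
    using assms by (intro add_nonneg_nonneg) auto
  thus ?thesis
    using power_mono[OF bernoulli_mgf_le[OF assms, of c], of k] by (simp add: exp_of_nat_mult)
qed

lemma pc_mgf_closed_form_le:
  fixes \<mu> \<rho> :: real and k :: nat
  assumes k: "0 < k" and \<rho>: "0 < \<rho>" "\<rho> \<le> 1"
  defines "c \<equiv> 2 * \<mu> / (\<rho> * real k)"
  shows "\<rho> * exp (-\<mu>/\<rho> - \<mu>) * (\<rho> * exp c + (1 - \<rho>) * ((1 + exp c) / 2))^k
           + (1 - \<rho>) * exp (-\<mu>/\<rho>) * ((1 + exp c) / 2)^k
         \<le> exp (\<mu>^2 / (2 * \<rho>^2 * real k))"
proof -
  define E where "E = \<mu>^2 / (2 * \<rho>^2 * real k)"
  \<comment> \<open>the edge probability at vertex 1 when it lies in the clique\<close>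
  define p where "p = (1 + \<rho>) / 2"
  have "\<rho> * exp c + (1 - \<rho>) * ((1 + exp c) / 2) = 1 - p + p * exp c"
    by (simp add: p_def field_simps)
  hence "exp (-\<mu>/\<rho> - \<mu>) * (\<rho> * exp c + (1 - \<rho>) * ((1 + exp c) / 2))^k
      = exp (-\<mu>/\<rho> - \<mu>) * (1 - p + p * exp c)^k"
    by simp
  also have "\<dots> \<le> exp (-\<mu>/\<rho> - \<mu>) * exp (real k * (p * c + c^2 / 8))"
    using \<rho> by (intro mult_left_mono bernoulli_mgf_power_le) (auto simp: p_def)
  also have "\<dots> = exp E"
    using k \<rho> by (simp add: c_def E_def p_def field_simps power2_eq_square flip: exp_add)
  finally have tilted_clique: "exp (-\<mu>/\<rho> - \<mu>) * (\<rho> * exp c + (1 - \<rho>) * ((1 + exp c) / 2))^k \<le> exp E" .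
  have "exp (-\<mu>/\<rho>) * ((1 + exp c) / 2)^k = exp (-\<mu>/\<rho>) * (1 - 1/2 + 1/2 * exp c)^k"
    by (simp add: add_divide_distrib)
  also have "\<dots> \<le> exp (-\<mu>/\<rho>) * exp (real k * (1/2 * c + c^2 / 8))"
    by (intro mult_left_mono bernoulli_mgf_power_le) auto
  also have "\<dots> = exp E"
    using k \<rho> by (simp add: c_def E_def field_simps power2_eq_square flip: exp_add)
  finally have tilted_rest: "exp (-\<mu>/\<rho>) * ((1 + exp c) / 2)^k \<le> exp E" .
  have "\<rho> * (exp (-\<mu>/\<rho> - \<mu>) * (\<rho> * exp c + (1 - \<rho>) * ((1 + exp c) / 2))^k)
          + (1 - \<rho>) * (exp (-\<mu>/\<rho>) * ((1 + exp c) / 2)^k)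
        \<le> \<rho> * exp E + (1 - \<rho>) * exp E"
    using \<rho> tilted_clique tilted_rest by (intro add_mono mult_left_mono) auto
  thus ?thesis
    by (simp add: E_def algebra_simps)
qed

text \<open>Conditionally on \<open>v 1\<close>, the deviation has mean zero.\<close>

definition pc_deviation :: "nat \<Rightarrow> real \<Rightarrow> (nat \<Rightarrow> bool) \<Rightarrow> (nat \<times> nat \<Rightarrow> bool) \<Rightarrow> real" where
  "pc_deviation n \<rho> v Y =
     (2 / \<rho>) * ((1 / (real n - 1)) * (\<Sum>i=2..n. of_bool (Y (1, i))) - 1/2) - of_bool (v 1)"

lemma pc_estimator_eq_tau_deviation:
  "pc_estimator n \<rho> l Y = tau l (of_bool (v 1) + pc_deviation n \<rho> v Y)"
  by (simp add: pc_estimator_def pc_deviation_def)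

lemma pc_deviation_mgf_le:
  fixes \<mu> \<rho> :: real
  assumes n: "2 \<le> n" and \<rho>: "0 < \<rho>" "\<rho> \<le> 1"
  shows "(\<integral>\<^sup>+ z. ennreal (exp (\<mu> * pc_deviation n \<rho> (fst z) (snd z))) \<partial>planted_clique n \<rho>)
           \<le> ennreal (exp (\<mu>^2 / (2 * \<rho>^2 * (real n - 1))))"
proof -
  define c where "c = 2 * \<mu> / (\<rho> * real (n - 1))"
  define K where "K b = exp (-\<mu>/\<rho> - \<mu> * of_bool b)" for b
  define m where "m b = (if b then exp c else (1 + exp c) / 2)" for b
  have n1: "real (n - 1) = real n - 1" "0 < n - 1"
    using n by auto
  have exp_deviation: "exp (\<mu> * pc_deviation n \<rho> v Y) = K (v 1) * exp (c * (\<Sum>i=2..n. of_bool (Y (1, i))))"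
    for v Y
  proof -
    have "\<mu> * pc_deviation n \<rho> v Y = (-\<mu>/\<rho> - \<mu> * of_bool (v 1)) + c * (\<Sum>i=2..n. of_bool (Y (1, i)))"
      unfolding pc_deviation_def c_def n1 using n \<rho> by (simp add: field_simps)
    thus ?thesis
      by (simp add: K_def exp_add)
  qed
  have inner: "(\<integral>\<^sup>+ Y. ennreal (exp (\<mu> * pc_deviation n \<rho> v Y)) \<partial>pc_Y_pmf n v)
      = ennreal (K (v 1) * (\<Prod>i\<in>{2..n}. m (v 1 \<and> v i)))" for v
  proof -
    have "measure_pmf.expectation (pc_Y_pmf n v) (\<lambda>Y. exp (\<mu> * pc_deviation n \<rho> v Y))
        = K (v 1) * (\<Prod>i\<in>{2..n}. m (v 1 \<and> v i))"
      unfolding exp_deviation m_def by (simp only: integral_mult_right_zero pc_Y_mgf_degree_1)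
    thus ?thesis
      by (subst nn_integral_eq_integral) (auto intro!: integrable_measure_pmf_finite finite_set_pc_Y_pmf)
  qed
  have "(\<integral>\<^sup>+ z. ennreal (exp (\<mu> * pc_deviation n \<rho> (fst z) (snd z))) \<partial>planted_clique n \<rho>)
      = (\<integral>\<^sup>+ v. ennreal (K (v 1) * (\<Prod>i\<in>{2..n}. m (v 1 \<and> v i))) \<partial>pc_v_pmf n \<rho>)"
    by (simp add: planted_clique_def nn_integral_return inner)
  also have "\<dots> = ennreal (\<rho> * K True * (\<rho> * m True + (1 - \<rho>) * m False)^(n-1)
                           + (1 - \<rho>) * K False * m False^(n-1))"
  proof -
    have "0 \<le> m b" for b
      by (simp add: m_def add_nonneg_nonneg)
    hence "measure_pmf.expectation (pc_v_pmf n \<rho>) (\<lambda>v. K (v 1) * (\<Prod>i\<in>{2..n}. m (v 1 \<and> v i)))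
        = \<rho> * K True * (\<rho> * m True + (1 - \<rho>) * m False)^(n-1) + (1 - \<rho>) * K False * m False^(n-1)"
      using n \<rho> by (intro expectation_pc_v_pmf_vertex_1) (auto simp: K_def)
    moreover have "0 \<le> K (v 1) * (\<Prod>i\<in>{2..n}. m (v 1 \<and> v i))" for v :: "nat \<Rightarrow> bool"
      using \<open>\<And>b. 0 \<le> m b\<close> by (simp add: K_def prod_nonneg)
    ultimately show ?thesis
      by (subst nn_integral_eq_integral) (auto intro!: integrable_measure_pmf_finite finite_set_pc_v_pmf)
  qed
  also have "\<dots> \<le> ennreal (exp (\<mu>^2 / (2 * \<rho>^2 * (real n - 1))))"
    using pc_mgf_closed_form_le[OF n1(2) \<rho>, of \<mu>] unfolding K_def m_def c_def n1(1)
    by (simp add: ennreal_leI)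
  finally show ?thesis .
qed

lemma expectation_le_two_sided_mgf:
  fixes M :: "'a pmf" and g W :: "'a \<Rightarrow> real"
  assumes g: "\<And>z. 0 \<le> g z" "\<And>z. g z \<le> A * exp (\<theta> * \<bar>W z\<bar>)"
    and AB: "0 \<le> A" "0 \<le> B"
    and mgf: "(\<integral>\<^sup>+ z. ennreal (exp (\<theta> * W z)) \<partial>M) \<le> ennreal B"
             "(\<integral>\<^sup>+ z. ennreal (exp ((-\<theta>) * W z)) \<partial>M) \<le> ennreal B"
  shows "measure_pmf.expectation M g \<le> 2 * A * B"
proof -
  have "(\<integral>\<^sup>+ z. ennreal (g z) \<partial>M)
      \<le> (\<integral>\<^sup>+ z. ennreal A * ennreal (exp (\<theta> * W z)) + ennreal A * ennreal (exp ((-\<theta>) * W z)) \<partial>M)"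
  proof (rule nn_integral_mono)
    fix z
    have "exp (\<theta> * \<bar>W z\<bar>) \<le> exp (\<theta> * W z) + exp ((-\<theta>) * W z)"
      by (cases "0 \<le> W z") (auto intro: add_increasing add_increasing2)
    hence "g z \<le> A * exp (\<theta> * W z) + A * exp ((-\<theta>) * W z)"
      using g(2)[of z] AB by (metis distrib_left mult_left_mono order_trans)
    thus "ennreal (g z) \<le> ennreal A * ennreal (exp (\<theta> * W z)) + ennreal A * ennreal (exp ((-\<theta>) * W z))"
      using AB by (simp add: ennreal_leI flip: ennreal_mult ennreal_plus)
  qed
  also have "\<dots> = ennreal A * (\<integral>\<^sup>+ z. ennreal (exp (\<theta> * W z)) \<partial>M)
                  + ennreal A * (\<integral>\<^sup>+ z. ennreal (exp ((-\<theta>) * W z)) \<partial>M)"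
    by (simp add: nn_integral_add nn_integral_cmult)
  also have "\<dots> \<le> ennreal A * ennreal B + ennreal A * ennreal B"
    using mgf by (intro add_mono mult_left_mono) auto
  also have "\<dots> = ennreal (2 * A * B)"
    using AB by (simp flip: ennreal_plus ennreal_mult)
  finally have "(\<integral>\<^sup>+ z. ennreal (g z) \<partial>M) \<le> ennreal (2 * A * B)" .
  moreover have "measure_pmf.expectation M g = enn2real (\<integral>\<^sup>+ z. ennreal (g z) \<partial>M)"
    using g(1) by (intro integral_eq_nn_integral) auto
  ultimately show ?thesis
    using AB by (simp add: enn2real_leI)
qed

lemma pc_sample_size_exponent_le:
  fixes n l :: nat and \<rho> r :: real
  assumes n: "n \<ge> 2" and \<rho>: "0 < \<rho>" "\<rho> \<le> 1" and r: "0 < r"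
    and H: "\<rho>^2 \<ge> 432 / (r^2 * (real n - 1)) * (ln 4 + 3 * real (2*l+1) * ln (9 / \<rho>))"
  shows "(50 * real (2*l+1) / r)^2 / (2 * \<rho>^2 * (real n - 1)) \<le> real (2*l+1) / 2"
proof -
  define D where "D = real (2*l+1)"
  define N where "N = real n - 1"
  have D: "1 \<le> D" and N: "0 < N"
    using n by (auto simp: D_def N_def)
  have "exp (2::real) = exp 1 * exp 1"
    by (simp flip: exp_add)
  also have "\<dots> \<le> 3 * 3"
    using exp_le by (intro mult_mono) auto
  also have "\<dots> \<le> 9 / \<rho>"
    using \<rho> by (simp add: field_simps)
  finally have "2 \<le> ln (9 / \<rho>)"
    using \<rho> by (subst ln_ge_iff) auto
  hence "3 * D * 2 \<le> 3 * D * ln (9 / \<rho>)"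
    using D by (intro mult_left_mono) auto
  hence "6 * D \<le> ln 4 + 3 * D * ln (9 / \<rho>)"
    using ln_ge_zero[of 4] by linarith
  hence "432 / (r^2 * N) * (6 * D) \<le> 432 / (r^2 * N) * (ln 4 + 3 * D * ln (9 / \<rho>))"
    using r N by (intro mult_left_mono) auto
  also have "\<dots> \<le> \<rho>^2"
    using H by (simp add: D_def N_def)
  finally have "2592 * D \<le> \<rho>^2 * (r^2 * N)"
    using r N by (simp add: field_simps)
  have "(50 * D / r)^2 / (2 * \<rho>^2 * N) = 1250 * D^2 / (\<rho>^2 * (r^2 * N))"
    using r \<rho> N by (simp add: field_simps power2_eq_square)
  also have "\<dots> \<le> 1250 * D^2 / (2592 * D)"
    using D \<open>2592 * D \<le> \<rho>^2 * (r^2 * N)\<close> by (intro divide_left_mono) auto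
  also have "\<dots> \<le> D / 2"
    using D by (simp add: field_simps power2_eq_square)
  finally show ?thesis
    by (simp add: D_def N_def)
qed

lemma tau_moment_const_le:
  fixes r :: real
  assumes r: "0 < r" "r < 1"
  shows "2 * tau_moment_const l (50 * real (2*l+1) / r) * exp (real (2*l+1) / 2)
           \<le> real (2*l+1)^2 * r^(2*l)"
proof -
  define D where "D = real (2*l+1)"
  define \<theta> where "\<theta> = 50 * D / r"
  have D: "1 \<le> D" and \<theta>: "0 < \<theta>"
    using r by (auto simp: D_def \<theta>_def)
  have fact_div: "fact k / \<theta>^k \<le> (r/25)^k" if "k \<le> 4*l+2" for k
  proof -
    have "(fact k :: real) \<le> real k ^ k"
      using fact_le_power[of k] by (metis of_nat_fact of_nat_le_iff of_nat_power)
    also have "\<dots> \<le> (2 * D)^k"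
      using that by (intro power_mono) (auto simp: D_def)
    finally have "fact k / \<theta>^k \<le> (2 * D)^k / \<theta>^k"
      using \<theta> by (intro divide_right_mono) auto
    also have "\<dots> = (2 * D / \<theta>)^k"
      by (simp add: power_divide)
    also have "2 * D / \<theta> = r/25"
      using D r by (simp add: \<theta>_def field_simps)
    finally show ?thesis .
  qed
  have tail: "(r/25)^k \<le> r^(2*l) / 625^l / 625" if "2*l+2 \<le> k" for k
  proof -
    have "(r/25)^k \<le> (r/25)^(2*l+2)"
      using that r by (intro power_decreasing) auto
    also have "\<dots> = r^(2*l) / 625^l * (r^2 / 625)"
    proof -
      have "(25::real)^l * 25^l = 625^l"
        by (simp flip: power_mult_distrib)
      thus ?thesis
        by (simp add: power_add power_divide power_mult power2_eq_square mult_ac)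
    qed
    also have "\<dots> \<le> r^(2*l) / 625^l / 625"
      using r by (simp add: divide_le_cancel power_le_one)
    finally show ?thesis .
  qed
  have exp_half: "exp (D/2) \<le> 2 * 3^l"
  proof -
    have "exp (1/2::real)^2 \<le> 2^2"
      using exp_le by (simp add: power2_eq_square flip: exp_add)
    hence "exp (1/2::real) \<le> 2"
      by (rule power2_le_imp_le) simp
    moreover have "exp (D/2) = exp (1/2) * exp 1 ^ l"
      by (simp add: D_def field_simps flip: exp_add exp_of_nat_mult)
    ultimately show ?thesis
      using exp_le by (auto intro!: mult_mono power_mono)
  qed
  have "2 * tau_moment_const l \<theta> * exp (D/2)
      \<le> 2 * (D^2 * 64^l * (2 * (r^(2*l) / 625^l / 625))) * (2 * 3^l)"
    unfolding tau_moment_const_def D_def[symmetric]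
    using fact_div[of "2*l+2"] fact_div[of "4*l+2"] tail[of "2*l+2"] tail[of "4*l+2"] exp_half \<theta>
    by (intro mult_mono mult_left_mono) auto
  also have "\<dots> = D^2 * r^(2*l) * (8/625 * (192 / 625)^l)"
    by (simp add: field_simps power_divide flip: power_mult_distrib)
  also have "\<dots> \<le> D^2 * r^(2*l)"
    using power_le_one[of "192/625::real" l] by (intro mult_left_le) auto
  finally show ?thesis
    by (simp add: D_def \<theta>_def)
qed

theorem mainTheorem14:
  fixes n l :: nat and \<rho> r :: real
  assumes "n \<ge> 2"
    and "0 < \<rho>" and "\<rho> < 1" and "\<rho> \<le> 1/2"
    and "0 < r" and "r < 1"
    and "\<rho>^2 \<ge> 432 / (r^2 * (real n - 1)) * (ln 4 + 3 * real (2*l+1) * ln (9 / \<rho>))"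
  shows "measure_pmf.expectation (planted_clique n \<rho>)
           (\<lambda>(v, Y). (pc_estimator n \<rho> l Y - of_bool (v 1))^2)
         \<le> real (2*l+1)^2 * r ^ (2*l)"
proof -
  define \<theta> where "\<theta> = 50 * real (2*l+1) / r"
  define B where "B = exp (\<theta>^2 / (2 * \<rho>^2 * (real n - 1)))"
  have \<theta>: "0 < \<theta>"
    using assms by (simp add: \<theta>_def)
  have "measure_pmf.expectation (planted_clique n \<rho>) (\<lambda>(v, Y). (pc_estimator n \<rho> l Y - of_bool (v 1))^2)
      \<le> 2 * tau_moment_const l \<theta> * B"
  proof (rule expectation_le_two_sided_mgf[where W = "\<lambda>z. pc_deviation n \<rho> (fst z) (snd z)"])
    fix z :: "(nat \<Rightarrow> bool) \<times> (nat \<times> nat \<Rightarrow> bool)"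
    obtain v Y where z: "z = (v, Y)"
      by fastforce
    show "(\<lambda>(v, Y). (pc_estimator n \<rho> l Y - of_bool (v 1))^2) z
        \<le> tau_moment_const l \<theta> * exp (\<theta> * \<bar>pc_deviation n \<rho> (fst z) (snd z)\<bar>)"
      unfolding z pc_estimator_eq_tau_deviation[of _ _ _ _ v] using \<theta>
      by (simp add: tau_dist_sq_le_exp)
  next
    show "(\<integral>\<^sup>+ z. ennreal (exp (\<theta> * pc_deviation n \<rho> (fst z) (snd z))) \<partial>planted_clique n \<rho>) \<le> ennreal B"
         "(\<integral>\<^sup>+ z. ennreal (exp ((-\<theta>) * pc_deviation n \<rho> (fst z) (snd z))) \<partial>planted_clique n \<rho>) \<le> ennreal B"
      using pc_deviation_mgf_le[of n \<rho> \<theta>] pc_deviation_mgf_le[of n \<rho> "-\<theta>"] assms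
      by (simp_all add: B_def)
  qed (auto simp: B_def tau_moment_const_nonneg \<theta>)
  also have "\<dots> \<le> 2 * tau_moment_const l \<theta> * exp (real (2*l+1) / 2)"
    using pc_sample_size_exponent_le[of n \<rho> r l] assms \<theta>
    by (auto simp: B_def \<theta>_def tau_moment_const_nonneg intro!: mult_left_mono)
  also have "\<dots> \<le> real (2*l+1)^2 * r^(2*l)"
    using tau_moment_const_le assms by (simp add: \<theta>_def)
  finally show ?thesis .
qed

end
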